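(* Let $\zeta_5=e^{2\pi i/5}$ and write $c_k=\theta[\tfrac15;\tfrac k5]$, $d_k=\theta[\tfrac35;\tfrac k5]$ for $k\in\{1,3,5,7,9\}$ (theta constants, functions of $\tau$). For every $\tau\in\mathbb{H}^2$, $$\theta[1;\tfrac15]=-\zeta_5^2\,\frac{d_1^3c_5+\zeta_5^3d_7^3c_1}{c_3^3},\qquad \theta[1;\tfrac35]=-\zeta_5^3\,\frac{c_7^3d_5-c_9^3d_3}{d_9^3}.$$
   Context: Let $\mathbb{H}^2=\{\tau\in\mathbb{C}:\Im\tau>0\}$. For $(\epsilon,\epsilon')\in\mathbb{R}^2$, $$\theta[\epsilon;\epsilon'](\zeta,\tau)=\sum_{n\in\mathbb{Z}}\exp\Big(2\pi i\Big[\tfrac12\big(n+\tfrac{\epsilon}{2}\big)^2\tau+\big(n+\tfrac{\epsilon}{2}\big)\big(\zeta+\tfrac{\epsilon'}{2}\big)\Big]\Big),$$ and $\theta[\epsilon;\epsilon']=\theta[\epsilon;\epsilon'](0,\tau)$ denotes the theta constant. *)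

theory Defs
  imports "HOL-Analysis.Analysis"
begin

definition theta_char :: "real \<Rightarrow> real \<Rightarrow> complex \<Rightarrow> complex \<Rightarrow> complex" where
  "theta_char e e' z t =
     (\<Sum>\<^sub>\<infinity> n::int. exp (2 * pi * \<i> *
        ((1/2) * (of_int n + of_real e / 2)^2 * t
         + (of_int n + of_real e / 2) * (z + of_real e' / 2))))"

definition theta_const :: "real \<Rightarrow> real \<Rightarrow> complex \<Rightarrow> complex" where
  "theta_const e e' t = theta_char e e' 0 t"

definition zeta5 :: complex where
  "zeta5 = exp (2 * pi * \<i> / 5)"

end

(*
  Clearing denominators, each identity says that three terms of the form
  (root of unity) * \<theta>[r/5; l/5]^3 * \<theta>[s/5; k/5] add up to zero. Each such term is a
  single sum of exp (\<pi> i \<tau> |v|^2 / 100 + 2 \<pi> i (l, l, l, k) . v / 100) over the coset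
  (r, r, r, s) + 10 Z^4. Split every coset by the parity of the sum of its quotient
  coordinates. The reflection v \<mapsto> v - (\<Sum>v / 2) (1, 1, 1, 1), composed with sign
  changes, preserves |v|^2 and matches the six half cosets in pairs along which the linear
  phases differ by exactly 1/2; the paired terms cancel, so the three sums add up to zero.

  Dividing by c_3^3 and d_9^3 is legitimate because \<theta>[r/5; k/5] does not vanish on the
  upper half plane when 0 < r < 5: by the Jacobi triple product, obtained as the limit of
  its finite q-binomial form, it is a nonzero multiple of a convergent product of nonzero
  factors.
*)

theory Submission
  imports Defs
begin

type_synonym int4 = "int \<times> int \<times> int \<times> int"

section \<open>Theta constants as lattice sums\<close>

text \<open>\<^term>\<open>theta_term t a k\<close> is the summand of \<open>\<theta>[r/5; k/5](0, t)\<close> at index \<open>n\<close>,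
  where \<open>a = 10 n + r\<close>.\<close>

definition theta_term :: "complex \<Rightarrow> int \<Rightarrow> int \<Rightarrow> complex" where
  "theta_term t a k = exp (2 * pi * \<i> * (of_int (a\<^sup>2) * t / 200 + of_int (a * k) / 100))"

definition residue10 :: "int \<Rightarrow> int set" where
  "residue10 r = {a. a mod 10 = r mod 10}"

lemma theta_const_eq_infsum:
  "theta_const (of_int r / 5) (of_int k / 5) t = (\<Sum>\<^sub>\<infinity>n::int. theta_term t (10 * n + r) k)"
  unfolding theta_const_def theta_char_def theta_term_def
  by (intro infsum_cong arg_cong[where f = exp]) (simp add: field_simps power2_eq_square)

lemma theta_const_eq_infsum_residue10:
  "theta_const (of_int r / 5) (of_int k / 5) t = (\<Sum>\<^sub>\<infinity>a\<in>residue10 r. theta_term t a k)"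
  unfolding theta_const_eq_infsum
  by (rule infsum_reindex_bij_witness[of UNIV "\<lambda>a. (a - r) div 10" "\<lambda>n. 10 * n + r"])
    (auto simp: residue10_def mod_eq_dvd_iff)

lemma norm_theta_term: "norm (theta_term t a k) = exp (- pi * Im t * of_int (a\<^sup>2) / 100)"
  unfolding theta_term_def by (simp add: norm_exp_eq_Re)

lemma range_int_Un_range_neg: "range int \<union> range (\<lambda>m. - int (Suc m)) = UNIV"
proof -
  have "x \<in> range int \<union> range (\<lambda>m. - int (Suc m))" for x
  proof (cases "x \<ge> 0")
    case True
    then have "x = int (nat x)" by simp
    then show ?thesis by blast
  next
    case False
    then have "x = - int (Suc (nat (- x - 1)))" by simp
    then show ?thesis by blast
  qed
  then show ?thesis by blast
qed

lemma abs_summable_on_int: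
  fixes f :: "int \<Rightarrow> 'a::real_normed_vector"
  assumes "summable (\<lambda>m. norm (f (int m)))" and "summable (\<lambda>m. norm (f (- int (Suc m))))"
  shows "(\<lambda>a. norm (f a)) summable_on UNIV"
proof -
  have "(\<lambda>a. norm (f a)) summable_on range int"
    using norm_summable_imp_summable_on[of "\<lambda>m. norm (f (int m))"] assms(1)
    by (subst summable_on_reindex) (auto simp: o_def)
  moreover have "(\<lambda>a. norm (f a)) summable_on range (\<lambda>m. - int (Suc m))"
    using norm_summable_imp_summable_on[of "\<lambda>m. norm (f (- int (Suc m)))"] assms(2)
    by (subst summable_on_reindex) (auto simp: o_def inj_on_def)
  ultimately have "(\<lambda>a. norm (f a)) summable_on range int \<union> range (\<lambda>m. - int (Suc m))"
    by (rule summable_on_union)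
  then show ?thesis by (simp only: range_int_Un_range_neg)
qed

lemma theta_term_abs_summable:
  assumes "Im t > 0"
  shows "(\<lambda>a. norm (theta_term t a k)) summable_on UNIV"
proof (rule abs_summable_on_int)
  define \<rho> where "\<rho> = exp (- pi * Im t / 100)"
  have \<rho>: "0 < \<rho>" "\<rho> < 1" unfolding \<rho>_def using assms by auto
  have bound: "norm (theta_term t a k) \<le> \<rho> ^ nat \<bar>a\<bar>" for a
  proof -
    have "\<bar>a\<bar> \<le> a\<^sup>2"
    proof (cases "a = 0")
      case False
      then have "\<bar>a\<bar> * 1 \<le> \<bar>a\<bar> * \<bar>a\<bar>" by (intro mult_left_mono) auto
      then show ?thesis by (simp add: power2_eq_square)
    qed simp
    then have "real (nat \<bar>a\<bar>) \<le> of_int (a\<^sup>2)"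
      by linarith
    then have "- pi * Im t * of_int (a\<^sup>2) / 100 \<le> real (nat \<bar>a\<bar>) * (- pi * Im t / 100)"
      using assms by (simp add: divide_right_mono mult_left_mono field_simps)
    then show ?thesis
      unfolding norm_theta_term \<rho>_def exp_of_nat_mult[symmetric] by simp
  qed
  have geom: "summable (\<lambda>n. \<rho> ^ n)" "summable (\<lambda>n. \<rho> ^ Suc n)"
    using \<rho> by (simp_all add: summable_geometric summable_mult)
  show "summable (\<lambda>m. norm (theta_term t (int m) k))"
    by (rule summable_comparison_test'[OF geom(1), where N = 0]) (use bound[of "int n" for n] in auto)
  show "summable (\<lambda>m. norm (theta_term t (- int (Suc m)) k))"
    by (rule summable_comparison_test'[OF geom(2), where N = 0])
      (use bound[of "- int (Suc n)" for n, unfolded abs_minus_cancel abs_of_nat nat_int] in simp)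
qed

section \<open>Cancellation of quartic lattice sums\<close>

lemma abs_summable_on_product:
  fixes f g :: "_ \<Rightarrow> 'a::{real_normed_field, banach}"
  assumes f: "(\<lambda>x. norm (f x)) summable_on A" and g: "(\<lambda>y. norm (g y)) summable_on B"
  shows "(\<lambda>p. norm (f (fst p) * g (snd p))) summable_on A \<times> B"
    and "(\<Sum>\<^sub>\<infinity>p\<in>A \<times> B. f (fst p) * g (snd p)) = infsum f A * infsum g B"
proof -
  have "(\<lambda>y. norm (f x * g y)) summable_on B" for x
    using summable_on_cmult_right[OF g, of "norm (f x)"] by (simp add: norm_mult)
  moreover have "(\<lambda>x. \<Sum>\<^sub>\<infinity>y\<in>B. norm (f x * g y)) summable_on A"
    using summable_on_cmult_left[OF f, of "\<Sum>\<^sub>\<infinity>y\<in>B. norm (g y)"]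
    by (simp add: norm_mult infsum_cmult_right[OF g])
  ultimately show abs: "(\<lambda>p. norm (f (fst p) * g (snd p))) summable_on A \<times> B"
    using Infinite_Sum.abs_summable_on_Sigma_iff
        [where f = "\<lambda>p. f (fst p) * g (snd p)" and A = A and B = "\<lambda>_. B"]
    by (simp add: abs_of_nonneg infsum_nonneg)
  have "(\<Sum>\<^sub>\<infinity>p\<in>A \<times> B. f (fst p) * g (snd p)) =
      (\<Sum>\<^sub>\<infinity>x\<in>A. \<Sum>\<^sub>\<infinity>y\<in>B. f x * g y)"
    using infsum_Sigma'_banach[where f = "\<lambda>x y. f x * g y" and A = A and B = "\<lambda>_. B"]
      abs_summable_summable[OF abs]
    by (simp add: split_beta')
  also have "\<dots> = infsum f A * infsum g B"
    using abs_summable_summable[OF f] abs_summable_summable[OF g]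
    by (simp add: infsum_cmult_left infsum_cmult_right)
  finally show "(\<Sum>\<^sub>\<infinity>p\<in>A \<times> B. f (fst p) * g (snd p)) = infsum f A * infsum g B" .
qed

definition sqnorm4 :: "int4 \<Rightarrow> int" where
  "sqnorm4 = (\<lambda>(a, b, c, d). a\<^sup>2 + b\<^sup>2 + c\<^sup>2 + d\<^sup>2)"

definition lin4 :: "int \<Rightarrow> int \<Rightarrow> int \<Rightarrow> int4 \<Rightarrow> int" where
  "lin4 l k m = (\<lambda>(a, b, c, d). l * (a + b + c) + k * d + m)"

definition quad_term :: "complex \<Rightarrow> int \<Rightarrow> int \<Rightarrow> int \<Rightarrow> int4 \<Rightarrow> complex" where
  "quad_term t l k m v = exp (2 * pi * \<i> * (of_int (sqnorm4 v) * t / 200 + of_int (lin4 l k m v) / 100))"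

definition quad_lattice :: "int \<Rightarrow> int \<Rightarrow> int4 set" where
  "quad_lattice r s = residue10 r \<times> residue10 r \<times> residue10 r \<times> residue10 s"

lemma quad_term_eq_prod:
  "quad_term t l k m (a, b, c, d) =
      exp (2 * pi * \<i> * of_int m / 100) *
      (theta_term t a l * (theta_term t b l * (theta_term t c l * theta_term t d k)))"
  unfolding quad_term_def theta_term_def sqnorm4_def lin4_def exp_add[symmetric]
  by (rule arg_cong[where f = exp]) (simp add: field_simps)

lemma
  assumes "Im t > 0"
  shows abs_summable_quad_term: "(\<lambda>v. norm (quad_term t l k m v)) summable_on quad_lattice r s"
    and infsum_quad_term: "(\<Sum>\<^sub>\<infinity>v\<in>quad_lattice r s. quad_term t l k m v) =
      exp (2 * pi * \<i> * of_int m / 100) *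
      theta_const (of_int r / 5) (of_int l / 5) t ^ 3 * theta_const (of_int s / 5) (of_int k / 5) t"
proof -
  have abs: "(\<lambda>a. norm (theta_term t a k)) summable_on residue10 r" for k r
    using theta_term_abs_summable[OF assms] by (rule summable_on_subset) simp
  define P where "P v = theta_term t (fst v) l * (theta_term t (fst (snd v)) l *
    (theta_term t (fst (snd (snd v))) l * theta_term t (snd (snd (snd v))) k))" for v
  note prod_cd = abs_summable_on_product[OF abs[of l r] abs[of k s]]
  note prod_bcd = abs_summable_on_product[OF abs[of l r] prod_cd(1)]
  note prod_abcd = abs_summable_on_product[OF abs[of l r] prod_bcd(1)]
  have eq: "quad_term t l k m = (\<lambda>v. exp (2 * pi * \<i> * of_int m / 100) * P v)"
    by (auto simp: P_def quad_term_eq_prod)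
  have absP: "(\<lambda>v. norm (P v)) summable_on quad_lattice r s"
    using prod_abcd(1) unfolding quad_lattice_def P_def .
  then show "(\<lambda>v. norm (quad_term t l k m v)) summable_on quad_lattice r s"
    unfolding eq norm_mult by (rule summable_on_cmult_right)
  have "infsum P (quad_lattice r s) =
      (\<Sum>\<^sub>\<infinity>a\<in>residue10 r. theta_term t a l) ^ 3 *
      (\<Sum>\<^sub>\<infinity>a\<in>residue10 s. theta_term t a k)"
    using prod_abcd(2) prod_bcd(2) prod_cd(2) unfolding quad_lattice_def P_def
    by (simp add: power3_eq_cube mult.assoc)
  then show "(\<Sum>\<^sub>\<infinity>v\<in>quad_lattice r s. quad_term t l k m v) =
      exp (2 * pi * \<i> * of_int m / 100) *
      theta_const (of_int r / 5) (of_int l / 5) t ^ 3 * theta_const (of_int s / 5) (of_int k / 5) t"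
    unfolding eq theta_const_eq_infsum_residue10 using abs_summable_summable[OF absP]
    by (simp add: infsum_cmult_right mult.assoc)
qed

definition sum4 :: "int4 \<Rightarrow> int" where
  "sum4 = (\<lambda>(a, b, c, d). a + b + c + d)"

definition reflect4 :: "int4 \<Rightarrow> int4" where
  "reflect4 = (\<lambda>(a, b, c, d). let h = (a + b + c + d) div 2 in (a - h, b - h, c - h, d - h))"

definition flip4 :: "int4 \<Rightarrow> int4 \<Rightarrow> int4" where
  "flip4 = (\<lambda>(e1, e2, e3, e4) (a, b, c, d). (e1 * a, e2 * b, e3 * c, e4 * d))"

definition signs4 :: "int4 set" where
  "signs4 = {-1, 1} \<times> {-1, 1} \<times> {-1, 1} \<times> {-1, 1}"

lemma flip4_flip4: "\<sigma> \<in> signs4 \<Longrightarrow> flip4 \<sigma> (flip4 \<sigma> v) = v"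
  by (cases v) (auto simp: signs4_def flip4_def)

lemma sqnorm4_flip4: "\<sigma> \<in> signs4 \<Longrightarrow> sqnorm4 (flip4 \<sigma> v) = sqnorm4 v"
  by (cases v) (auto simp: signs4_def flip4_def sqnorm4_def)

lemma even_sum4_flip4: "\<sigma> \<in> signs4 \<Longrightarrow> even (sum4 (flip4 \<sigma> v)) \<longleftrightarrow> even (sum4 v)"
  by (cases v) (auto simp: signs4_def flip4_def sum4_def)

lemma even_sum4_reflect4: "even (sum4 (reflect4 v)) \<longleftrightarrow> even (sum4 v)"
  by (cases v) (simp add: reflect4_def sum4_def Let_def, presburger)

lemma reflect4_eq: "a + b + c + d = 2 * h \<Longrightarrow> reflect4 (a, b, c, d) = (a - h, b - h, c - h, d - h)"
  by (simp add: reflect4_def)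

lemma even_sum4_obtain:
  assumes "even (sum4 v)"
  obtains a b c d h where "v = (a, b, c, d)" "a + b + c + d = 2 * h"
proof -
  obtain a b c d where v: "v = (a, b, c, d)" by (cases v)
  with assms have "even (a + b + c + d)" by (simp add: sum4_def)
  then obtain h where "a + b + c + d = 2 * h" by (rule evenE)
  with v that show thesis by blast
qed

lemma reflect4_reflect4: "even (sum4 v) \<Longrightarrow> reflect4 (reflect4 v) = v"
proof (elim even_sum4_obtain)
  fix a b c d h assume v: "v = (a, b, c, d)" and h: "a + b + c + d = 2 * h"
  have "(a - h) + (b - h) + (c - h) + (d - h) = 2 * (- h)" using h by simp
  then show "reflect4 (reflect4 v) = v"
    unfolding v reflect4_eq[OF h] by (subst reflect4_eq) simp_all
qed

lemma sqnorm4_reflect4: "even (sum4 v) \<Longrightarrow> sqnorm4 (reflect4 v) = sqnorm4 v"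
proof (elim even_sum4_obtain)
  fix a b c d h assume v: "v = (a, b, c, d)" and h: "a + b + c + d = 2 * h"
  have "(a - h)\<^sup>2 + (b - h)\<^sup>2 + (c - h)\<^sup>2 + (d - h)\<^sup>2 =
      a\<^sup>2 + b\<^sup>2 + c\<^sup>2 + d\<^sup>2 - 2 * h * (a + b + c + d) + 4 * h\<^sup>2"
    by (simp add: power2_eq_square algebra_simps)
  then show "sqnorm4 (reflect4 v) = sqnorm4 v"
    unfolding v reflect4_eq[OF h] sqnorm4_def using h by (simp add: power2_eq_square)
qed

lemma quad_term_eq_uminus:
  assumes "sqnorm4 w = sqnorm4 v" and "100 dvd lin4 l k m v - lin4 l' k' m' w - 50"
  shows "quad_term t l k m v = - quad_term t l' k' m' w"
proof -
  obtain n where n: "lin4 l k m v = lin4 l' k' m' w + 50 + 100 * n"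
    using assms(2) by (auto simp: algebra_simps elim!: dvdE)
  have "2 * pi * \<i> * (of_int (sqnorm4 v) * t / 200 + of_int (lin4 l k m v) / 100) =
        2 * pi * \<i> * (of_int (sqnorm4 w) * t / 200 + of_int (lin4 l' k' m' w) / 100)
          + ((2 * of_int n + 1) * pi) * \<i>"
    unfolding n assms(1) by (simp add: field_simps)
  moreover have "exp (((2 * of_int n + 1) * pi) * \<i>) = -1"
    by (rule exp_integer_2pi_plus1) simp
  ultimately show ?thesis
    unfolding quad_term_def by (simp add: exp_add)
qed

lemma infsum_quad_term_reflection:
  assumes signs: "\<sigma> \<in> signs4" "\<tau> \<in> signs4"
    and even: "\<And>v. v \<in> X \<Longrightarrow> even (sum4 v)"
    and maps_to: "\<And>v. v \<in> X \<Longrightarrow> flip4 \<sigma> (reflect4 (flip4 \<tau> v)) \<in> Y"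
    and maps_from: "\<And>w. w \<in> Y \<Longrightarrow> flip4 \<tau> (reflect4 (flip4 \<sigma> w)) \<in> X"
    and phase: "\<And>v. v \<in> X \<Longrightarrow>
      100 dvd lin4 l k m v - lin4 l' k' m' (flip4 \<sigma> (reflect4 (flip4 \<tau> v))) - 50"
  shows "infsum (quad_term t l k m) X = - infsum (quad_term t l' k' m') Y"
proof -
  define j where "j v = flip4 \<sigma> (reflect4 (flip4 \<tau> v))" for v
  define i where "i w = flip4 \<tau> (reflect4 (flip4 \<sigma> w))" for w
  have even_flip: "v \<in> X \<Longrightarrow> even (sum4 (flip4 \<tau> v))" for v
    using even even_sum4_flip4[OF signs(2)] by blast
  have "infsum (\<lambda>v. - quad_term t l k m v) X = infsum (quad_term t l' k' m') Y"
  proof (rule infsum_reindex_bij_witness[of X i j])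
    fix v assume v: "v \<in> X"
    show "i (j v) = v"
      unfolding i_def j_def using v even_flip by (simp add: flip4_flip4 reflect4_reflect4 signs)
    show "j v \<in> Y" unfolding j_def by (rule maps_to[OF v])
    have "sqnorm4 (j v) = sqnorm4 v"
      unfolding j_def using v even_flip by (simp add: sqnorm4_flip4 sqnorm4_reflect4 signs)
    then show "quad_term t l' k' m' (j v) = - quad_term t l k m v"
      using quad_term_eq_uminus[OF _ phase[OF v], of t] unfolding j_def by simp
  next
    fix w assume w: "w \<in> Y"
    have "even (sum4 (reflect4 (flip4 \<sigma> w)))"
      using even[OF maps_from[OF w]] even_sum4_flip4[OF signs(2)] by simp
    then show "j (i w) = w"
      unfolding i_def j_def by (simp add: flip4_flip4 reflect4_reflect4 even_sum4_reflect4 signs)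
    show "i w \<in> X" unfolding i_def by (rule maps_from[OF w])
  qed
  then show ?thesis unfolding infsum_uminus by (metis minus_minus)
qed

lemma infsum_split_pred:
  fixes f :: "'a \<Rightarrow> 'b::banach"
  assumes "f summable_on A"
  shows "infsum f A = infsum f {x \<in> A. P x} + infsum f {x \<in> A. \<not> P x}"
proof -
  have "A = {x \<in> A. P x} \<union> {x \<in> A. \<not> P x}" by blast
  then show ?thesis
    using assms by (metis (no_types, lifting) infsum_Un_disjoint disjoint_iff mem_Collect_eq
      summable_on_subset_banach subset_eq)
qed

lemma quad_lattice_param:
  assumes "v \<in> quad_lattice r s"
  obtains a b c q p where "v = (10 * a + r, 10 * b + r, 10 * c + r, 10 * (2 * q + p - a - b - c) + s)"
    and "p = 0 \<or> p = 1"
proof -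
  obtain A B C D where v: "v = (A, B, C, D)" by (cases v)
  have decomp: "X mod 10 = y mod 10 \<Longrightarrow> X = 10 * ((X - y) div 10) + y" for X y :: int
    by (simp add: mod_eq_dvd_iff)
  define a where "a = (A - r) div 10"
  define b where "b = (B - r) div 10"
  define c where "c = (C - r) div 10"
  define d where "d = (D - s) div 10"
  have "A = 10 * a + r" "B = 10 * b + r" "C = 10 * c + r" "D = 10 * d + s"
    using assms decomp unfolding v quad_lattice_def residue10_def a_def b_def c_def d_def by auto
  moreover have "d = 2 * ((a + b + c + d) div 2) + (a + b + c + d) mod 2 - a - b - c" by simp
  moreover have "(a + b + c + d) mod 2 = 0 \<or> (a + b + c + d) mod 2 = 1" by presburger
  ultimately show thesis using that v by metis
qed

lemma mem_quad_lattice: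
  "(a, b, c, d) \<in> quad_lattice r s \<longleftrightarrow>
     a mod 10 = r mod 10 \<and> b mod 10 = r mod 10 \<and> c mod 10 = r mod 10 \<and> d mod 10 = s mod 10"
  by (simp add: quad_lattice_def residue10_def)

lemmas quad_reflection_simps =
  signs4_def sum4_def reflect4_def flip4_def lin4_def mem_quad_lattice Let_def algebra_simps

lemma infsum_quad_lattice_split:
  assumes "Im t > 0"
  shows "infsum (quad_term t l k m) (quad_lattice r s) =
    infsum (quad_term t l k m) {v \<in> quad_lattice r s. sum4 v mod 20 = e} +
    infsum (quad_term t l k m) {v \<in> quad_lattice r s. sum4 v mod 20 \<noteq> e}"
  using abs_summable_summable[OF abs_summable_quad_term[OF assms]] by (rule infsum_split_pred)

lemma quad_lattice_identity_1:
  assumes "Im t > 0"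
  shows "infsum (quad_term t 3 1 0) (quad_lattice 1 5) + infsum (quad_term t 1 5 40) (quad_lattice 3 1)
         + infsum (quad_term t 7 1 0) (quad_lattice 3 1) = 0"
proof -
  \<comment> \<open>On \<open>quad_lattice 1 5\<close> the coordinate sum is \<open>10 (a + b + c + d) + 8\<close>, so its residue
    modulo 20 records the parity of the quotient coordinates; likewise below.\<close>
  have "infsum (quad_term t 3 1 0) {v \<in> quad_lattice 1 5. sum4 v mod 20 = 8} =
      - infsum (quad_term t 7 1 0) {v \<in> quad_lattice 3 1. sum4 v mod 20 = 10}"
    by (rule infsum_quad_term_reflection[of "(-1, -1, -1, 1)" "(1, 1, 1, 1)"])
      (auto simp: quad_reflection_simps elim!: quad_lattice_param, presburger+)
  moreover have "infsum (quad_term t 1 5 40) {v \<in> quad_lattice 3 1. sum4 v mod 20 = 10} =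
      - infsum (quad_term t 3 1 0) {v \<in> quad_lattice 1 5. sum4 v mod 20 \<noteq> 8}"
    by (rule infsum_quad_term_reflection[of "(-1, -1, -1, 1)" "(1, 1, 1, -1)"])
      (auto simp: quad_reflection_simps elim!: quad_lattice_param, presburger+)
  moreover have "infsum (quad_term t 1 5 40) {v \<in> quad_lattice 3 1. sum4 v mod 20 \<noteq> 10} =
      - infsum (quad_term t 7 1 0) {v \<in> quad_lattice 3 1. sum4 v mod 20 \<noteq> 10}"
    by (rule infsum_quad_term_reflection[of "(1, 1, 1, 1)" "(1, 1, 1, 1)"])
      (auto simp: quad_reflection_simps elim!: quad_lattice_param, presburger+)
  ultimately show ?thesis
    unfolding infsum_quad_lattice_split[OF assms, where r = 1 and s = 5 and e = 8]
      infsum_quad_lattice_split[OF assms, where r = 3 and s = 1 and e = 10]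
    by simp
qed

lemma quad_lattice_identity_2:
  assumes "Im t > 0"
  shows "infsum (quad_term t 9 3 0) (quad_lattice 3 5) + infsum (quad_term t 7 5 60) (quad_lattice 1 3)
         + infsum (quad_term t 9 3 10) (quad_lattice 1 3) = 0"
proof -
  have "infsum (quad_term t 9 3 0) {v \<in> quad_lattice 3 5. sum4 v mod 20 = 14} =
      - infsum (quad_term t 7 5 60) {v \<in> quad_lattice 1 3. sum4 v mod 20 \<noteq> 6}"
    by (rule infsum_quad_term_reflection[of "(1, 1, 1, 1)" "(1, 1, 1, -1)"])
      (auto simp: quad_reflection_simps elim!: quad_lattice_param, presburger+)
  moreover have "infsum (quad_term t 7 5 60) {v \<in> quad_lattice 1 3. sum4 v mod 20 = 6} =
      - infsum (quad_term t 9 3 10) {v \<in> quad_lattice 1 3. sum4 v mod 20 = 6}"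
    by (rule infsum_quad_term_reflection[of "(1, 1, 1, -1)" "(1, 1, 1, -1)"])
      (auto simp: quad_reflection_simps elim!: quad_lattice_param, presburger+)
  moreover have "infsum (quad_term t 9 3 0) {v \<in> quad_lattice 3 5. sum4 v mod 20 \<noteq> 14} =
      - infsum (quad_term t 9 3 10) {v \<in> quad_lattice 1 3. sum4 v mod 20 \<noteq> 6}"
    by (rule infsum_quad_term_reflection[of "(1, 1, 1, 1)" "(1, 1, 1, 1)"])
      (auto simp: quad_reflection_simps elim!: quad_lattice_param, presburger+)
  ultimately show ?thesis
    unfolding infsum_quad_lattice_split[OF assms, where r = 3 and s = 5 and e = 14]
      infsum_quad_lattice_split[OF assms, where r = 1 and s = 3 and e = 6]
    by simp
qed

section \<open>Gaussian binomials and the Jacobi triple product\<close>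

fun qbinom :: "'a::comm_ring_1 \<Rightarrow> nat \<Rightarrow> nat \<Rightarrow> 'a" where
  "qbinom p 0 j = (if j = 0 then 1 else 0)"
| "qbinom p (Suc M) j = (if j = 0 then 1 else qbinom p M j + p ^ (M + 1 - j) * qbinom p M (j - 1))"

lemma qbinom_0_right [simp]: "qbinom p M 0 = 1"
  by (cases M) auto

lemma qbinom_eq_0: "M < j \<Longrightarrow> qbinom p M j = 0"
  by (induction M arbitrary: j) auto

lemma qbinomial_theorem:
  "(\<Prod>k<M. 1 + y * Q ^ (2 * k)) = (\<Sum>j\<le>M. qbinom (Q\<^sup>2) M j * Q ^ (j * (j - 1)) * y ^ j)"
proof (induction M)
  case 0
  then show ?case by simp
next
  case (Suc M)
  define F where "F j = qbinom (Q\<^sup>2) M j * Q ^ (j * (j - 1)) * y ^ j" for j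
  have A: "(\<Sum>j\<le>Suc M. qbinom (Q\<^sup>2) M j * Q ^ (j * (j - 1)) * y ^ j) = (\<Sum>j\<le>M. F j)"
    by (simp add: F_def qbinom_eq_0)
  have B: "(\<Sum>j\<le>Suc M. (if j = 0 then 0 else (Q\<^sup>2) ^ (M + 1 - j) * qbinom (Q\<^sup>2) M (j - 1)) *
        Q ^ (j * (j - 1)) * y ^ j) = (\<Sum>i\<le>M. F i * (y * Q ^ (2 * M)))"
  proof -
    have "(\<Sum>j\<le>Suc M. (if j = 0 then 0 else (Q\<^sup>2) ^ (M + 1 - j) * qbinom (Q\<^sup>2) M (j - 1)) *
          Q ^ (j * (j - 1)) * y ^ j) =
        (\<Sum>i\<le>M. (Q\<^sup>2) ^ (M - i) * qbinom (Q\<^sup>2) M i * Q ^ (Suc i * i) * y ^ Suc i)"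
      by (subst sum.atMost_Suc_shift) simp
    also have "\<dots> = (\<Sum>i\<le>M. F i * (y * Q ^ (2 * M)))"
    proof (rule sum.cong)
      fix i assume "i \<in> {..M}"
      then have "2 * (M - i) + Suc i * i = i * (i - 1) + 2 * M"
        by (cases i) (auto simp: algebra_simps)
      then have Qe: "(Q\<^sup>2) ^ (M - i) * Q ^ (Suc i * i) = Q ^ (i * (i - 1)) * Q ^ (2 * M)"
        by (simp only: power_mult[symmetric] power_add[symmetric])
      have "(Q\<^sup>2) ^ (M - i) * qbinom (Q\<^sup>2) M i * Q ^ (Suc i * i) * y ^ Suc i =
          ((Q\<^sup>2) ^ (M - i) * Q ^ (Suc i * i)) * (qbinom (Q\<^sup>2) M i * y ^ Suc i)"
        by (simp only: ac_simps)
      also have "\<dots> = F i * (y * Q ^ (2 * M))"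
        unfolding Qe F_def by (simp only: ac_simps power_Suc)
      finally show "(Q\<^sup>2) ^ (M - i) * qbinom (Q\<^sup>2) M i * Q ^ (Suc i * i) * y ^ Suc i =
          F i * (y * Q ^ (2 * M))" .
    qed simp
    finally show ?thesis .
  qed
  have "(\<Sum>j\<le>Suc M. qbinom (Q\<^sup>2) (Suc M) j * Q ^ (j * (j - 1)) * y ^ j) =
      (\<Sum>j\<le>Suc M. qbinom (Q\<^sup>2) M j * Q ^ (j * (j - 1)) * y ^ j +
        (if j = 0 then 0 else (Q\<^sup>2) ^ (M + 1 - j) * qbinom (Q\<^sup>2) M (j - 1)) * Q ^ (j * (j - 1)) * y ^ j)"
    by (rule sum.cong) (auto simp: algebra_simps)
  also have "\<dots> = (\<Sum>j\<le>M. F j) * (1 + y * Q ^ (2 * M))"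
    unfolding sum.distrib A B sum_distrib_right[symmetric] by (simp add: algebra_simps)
  also have "(\<Sum>j\<le>M. F j) = (\<Prod>k<M. 1 + y * Q ^ (2 * k))"
    using Suc.IH by (simp add: F_def)
  finally show ?case by simp
qed

definition qpochhammer :: "'a::comm_ring_1 \<Rightarrow> nat \<Rightarrow> 'a" where
  "qpochhammer p j = (\<Prod>l<j. 1 - p ^ (l + 1))"

definition qfalling :: "'a::comm_ring_1 \<Rightarrow> nat \<Rightarrow> nat \<Rightarrow> 'a" where
  "qfalling p M j = (\<Prod>l<j. 1 - p ^ (M - l))"

lemma qbinom_mult_qpochhammer: "j \<le> M \<Longrightarrow> qbinom p M j * qpochhammer p j = qfalling p M j"
proof (induction M arbitrary: j)
  case 0
  then show ?case by (simp add: qpochhammer_def qfalling_def)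
next
  case (Suc M)
  show ?case
  proof (cases j)
    case 0
    then show ?thesis by (simp add: qpochhammer_def qfalling_def)
  next
    case (Suc i)
    with Suc.prems have i: "i \<le> M" by simp
    have step: "qpochhammer p (Suc i) = qpochhammer p i * (1 - p ^ (i + 1))"
      by (simp add: qpochhammer_def)
    have t1: "qbinom p M (Suc i) * qpochhammer p (Suc i) = qfalling p M i * (1 - p ^ (M - i))"
    proof (cases "i < M")
      case True
      then have "qbinom p M (Suc i) * qpochhammer p (Suc i) = qfalling p M (Suc i)"
        by (intro Suc.IH) simp
      then show ?thesis by (simp add: qfalling_def)
    next
      case False
      with i show ?thesis by (simp add: qbinom_eq_0)
    qed
    have t2: "qbinom p M i * qpochhammer p (Suc i) = qfalling p M i * (1 - p ^ (i + 1))"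
      using Suc.IH[OF i] step by (metis mult.assoc)
    have "M - i + (i + 1) = M + 1" using i by simp
    then have pe: "p ^ (M - i) * p ^ (i + 1) = p ^ (M + 1)"
      by (simp only: power_add[symmetric])
    have "qbinom p (Suc M) j * qpochhammer p j =
        qbinom p M (Suc i) * qpochhammer p (Suc i) + p ^ (M - i) * (qbinom p M i * qpochhammer p (Suc i))"
      using Suc by (simp add: algebra_simps)
    also have "\<dots> = qfalling p M i * ((1 - p ^ (M - i)) + p ^ (M - i) - p ^ (M - i) * p ^ (i + 1))"
      unfolding t1 t2 by (simp add: algebra_simps)
    also have "\<dots> = qfalling p (Suc M) j"
      unfolding pe Suc qfalling_def prod.lessThan_Suc_shift by simp
    finally show ?thesis .
  qed
qed

lemma prod_lessThan_add: "(\<Prod>k<N + K. f k) = (\<Prod>k<N. f k) * (\<Prod>i<K. f (N + i))"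
  for f :: "nat \<Rightarrow> 'a::comm_monoid_mult"
  by (induction K) (simp_all add: ac_simps)

lemma sum_lessThan_add: "(\<Sum>k<N + K. f k) = (\<Sum>k<N. f k) + (\<Sum>i<K. f (N + i))"
  for f :: "nat \<Rightarrow> 'a::comm_monoid_add"
  by (induction K) (simp_all add: ac_simps)

lemma sum_odds_eq_square: "(\<Sum>i<N. 2 * i + 1) = N * (N::nat)"
  by (induction N) (simp_all add: algebra_simps)

lemma prod_qbinomial_shift:
  fixes Q x :: complex
  assumes Q: "Q \<noteq> 0" and x: "x \<noteq> 0" and N: "N \<ge> 1"
  shows "(\<Prod>k<2 * N. 1 + x / Q ^ (2 * N - 1) * Q ^ (2 * k)) =
    x ^ N / Q ^ (N * N) * (\<Prod>i<N. (1 + x * Q ^ (2 * i + 1)) * (1 + Q ^ (2 * i + 1) / x))"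
proof -
  define f where "f k = 1 + x / Q ^ (2 * N - 1) * Q ^ (2 * k)" for k
  have upper: "f (N + i) = 1 + x * Q ^ (2 * i + 1)" for i
  proof -
    have "Q ^ (2 * (N + i)) = Q ^ (2 * N - 1) * Q ^ (2 * i + 1)"
      unfolding power_add[symmetric] using N by (simp add: algebra_simps)
    then show ?thesis unfolding f_def using Q by simp
  qed
  have lower: "f (N - Suc i) = x / Q ^ (2 * i + 1) * (1 + Q ^ (2 * i + 1) / x)" if "i < N" for i
  proof -
    have "2 * (N - Suc i) + (2 * i + 1) = 2 * N - 1" using that by arith
    then have "Q ^ (2 * N - 1) = Q ^ (2 * (N - Suc i)) * Q ^ (2 * i + 1)"
      by (simp only: power_add[symmetric])
    then show ?thesis unfolding f_def using x Q by (simp add: field_simps)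
  qed
  have "(\<Prod>i<N. Q ^ (2 * i + 1)) = Q ^ (N * N)"
    by (simp only: power_sum[symmetric] sum_odds_eq_square)
  then have odd_powers: "(\<Prod>i<N. x / Q ^ (2 * i + 1)) = x ^ N / Q ^ (N * N)"
    by (simp add: prod_dividef)
  have "(\<Prod>k<2 * N. f k) = (\<Prod>i<N. f (N - Suc i)) * (\<Prod>i<N. f (N + i))"
    using prod_lessThan_add[of f N N] by (simp add: mult_2 prod.nat_diff_reindex)
  also have "\<dots> = (\<Prod>i<N. x / Q ^ (2 * i + 1) * (1 + Q ^ (2 * i + 1) / x)) *
      (\<Prod>i<N. 1 + x * Q ^ (2 * i + 1))"
    by (intro arg_cong2[where f = "(*)"] prod.cong) (simp_all add: lower upper)
  also have "\<dots> = (\<Prod>i<N. x / Q ^ (2 * i + 1)) *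
      (\<Prod>i<N. (1 + x * Q ^ (2 * i + 1)) * (1 + Q ^ (2 * i + 1) / x))"
    by (simp only: prod.distrib ac_simps)
  finally show ?thesis unfolding f_def odd_powers .
qed

lemma qbinomial_term_shift:
  fixes Q x :: complex
  assumes Q: "Q \<noteq> 0" and x: "x \<noteq> 0" and N: "N \<ge> 1"
  shows "Q ^ ((N + m) * (N + m - 1)) * (x / Q ^ (2 * N - 1)) ^ (N + m) =
      x ^ N / Q ^ (N * N) * (Q ^ (m * m) * x ^ m)"
    and "m < N \<Longrightarrow> Q ^ ((N - Suc m) * (N - Suc m - 1)) * (x / Q ^ (2 * N - 1)) ^ (N - Suc m) =
      x ^ N / Q ^ (N * N) * (Q ^ ((m + 1) * (m + 1)) * (1 / x) ^ (m + 1))"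
proof -
  have "(N + m) * (N + m - 1) + N * N = m * m + (2 * N - 1) * (N + m)"
    using N by (cases N) (auto simp: algebra_simps)
  then have "Q ^ ((N + m) * (N + m - 1)) * Q ^ (N * N) = Q ^ (m * m) * (Q ^ (2 * N - 1)) ^ (N + m)"
    by (simp only: power_add[symmetric] power_mult[symmetric])
  then show "Q ^ ((N + m) * (N + m - 1)) * (x / Q ^ (2 * N - 1)) ^ (N + m) =
      x ^ N / Q ^ (N * N) * (Q ^ (m * m) * x ^ m)"
    using Q by (simp add: field_simps power_divide power_add)
next
  assume "m < N"
  then obtain R where R: "N = Suc (m + R)" by (metis add_Suc_right less_iff_Suc_add)
  have "R * (R - 1) + N * N = (m + 1) * (m + 1) + (2 * N - 1) * R"
    unfolding R by (cases R) (auto simp: algebra_simps)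
  then have "Q ^ (R * (R - 1)) * Q ^ (N * N) = Q ^ ((m + 1) * (m + 1)) * (Q ^ (2 * N - 1)) ^ R"
    by (simp only: power_add[symmetric] power_mult[symmetric])
  moreover have "x ^ N = x ^ R * x ^ (m + 1)" unfolding R by (simp add: power_add)
  ultimately show "Q ^ ((N - Suc m) * (N - Suc m - 1)) * (x / Q ^ (2 * N - 1)) ^ (N - Suc m) =
      x ^ N / Q ^ (N * N) * (Q ^ ((m + 1) * (m + 1)) * (1 / x) ^ (m + 1))"
    using Q x R by (simp add: field_simps power_divide)
qed

lemma jacobi_triple_product_finite:
  fixes Q x :: complex
  assumes Q: "Q \<noteq> 0" and x: "x \<noteq> 0"
  shows "(\<Prod>i<N. (1 + x * Q ^ (2 * i + 1)) * (1 + Q ^ (2 * i + 1) / x)) =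
      (\<Sum>m\<le>N. qbinom (Q\<^sup>2) (2 * N) (N + m) * Q ^ (m * m) * x ^ m) +
      (\<Sum>m<N. qbinom (Q\<^sup>2) (2 * N) (N - Suc m) * Q ^ ((m + 1) * (m + 1)) * (1 / x) ^ (m + 1))"
    (is "?P = ?A + ?B")
proof (cases "N = 0")
  case False
  then have N: "N \<ge> 1" by simp
  define c where "c = x ^ N / Q ^ (N * N)"
  define g where "g j = qbinom (Q\<^sup>2) (2 * N) j * Q ^ (j * (j - 1)) * (x / Q ^ (2 * N - 1)) ^ j" for j
  have "c * (\<Prod>i<N. (1 + x * Q ^ (2 * i + 1)) * (1 + Q ^ (2 * i + 1) / x)) = (\<Sum>j\<le>2 * N. g j)"
    using prod_qbinomial_shift[OF Q x N] qbinomial_theorem[where M = "2 * N" and y = "x / Q ^ (2 * N - 1)" and Q = Q]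
    unfolding g_def c_def by simp
  also have "(\<Sum>j\<le>2 * N. g j) = (\<Sum>m<N. g (N - Suc m)) + (\<Sum>m\<le>N. g (N + m))"
  proof -
    have "(\<Sum>j\<le>2 * N. g j) = (\<Sum>j<N + Suc N. g j)"
      by (simp add: lessThan_Suc_atMost[symmetric] mult_2)
    also have "\<dots> = (\<Sum>j<N. g j) + (\<Sum>m<Suc N. g (N + m))"
      by (rule sum_lessThan_add)
    finally show ?thesis
      by (simp add: sum.nat_diff_reindex lessThan_Suc_atMost)
  qed
  also have "(\<Sum>m<N. g (N - Suc m)) =
      c * (\<Sum>m<N. qbinom (Q\<^sup>2) (2 * N) (N - Suc m) * Q ^ ((m + 1) * (m + 1)) * (1 / x) ^ (m + 1))"
    unfolding sum_distrib_left
  proof (rule sum.cong)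
    fix m assume "m \<in> {..<N}"
    then have "Q ^ ((N - Suc m) * (N - Suc m - 1)) * (x / Q ^ (2 * N - 1)) ^ (N - Suc m) =
        c * (Q ^ ((m + 1) * (m + 1)) * (1 / x) ^ (m + 1))"
      unfolding c_def by (intro qbinomial_term_shift(2)[OF Q x N]) simp
    then show "g (N - Suc m) =
        c * (qbinom (Q\<^sup>2) (2 * N) (N - Suc m) * Q ^ ((m + 1) * (m + 1)) * (1 / x) ^ (m + 1))"
      unfolding g_def mult.assoc by (simp only: ac_simps)
  qed simp
  also have "(\<Sum>m\<le>N. g (N + m)) = c * (\<Sum>m\<le>N. qbinom (Q\<^sup>2) (2 * N) (N + m) * Q ^ (m * m) * x ^ m)"
    unfolding sum_distrib_left g_def c_def
    by (simp only: mult.assoc qbinomial_term_shift(1)[OF Q x N]) (simp only: ac_simps)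
  finally have "c * ?P = c * (?A + ?B)" by (simp only: distrib_left add.commute)
  moreover have "c \<noteq> 0" using Q x unfolding c_def by simp
  ultimately show ?thesis by simp
qed simp

lemma sum_power_lessThan_le:
  fixes r :: real
  assumes "0 \<le> r" "r < 1"
  shows "(\<Sum>i<j. r ^ i) \<le> 1 / (1 - r)"
proof -
  have "(\<Sum>i<j. r ^ i) = (1 - r ^ j) / (1 - r)" using assms by (simp add: sum_gp_strict)
  also have "\<dots> \<le> 1 / (1 - r)" using assms by (intro divide_right_mono) auto
  finally show ?thesis .
qed

lemma norm_qfalling_minus_1_le:
  fixes p :: complex
  assumes p: "norm p < 1" and j: "j \<le> M"
  shows "norm (qfalling p M j - 1) \<le> exp (norm p ^ (M - j + 1) / (1 - norm p)) - 1"
proof -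
  define r where "r = norm p"
  have r: "0 \<le> r" "r < 1" using p unfolding r_def by auto
  have "norm (qfalling p M j - 1) \<le> (\<Prod>l<j. 1 + norm (- (p ^ (M - l)))) - 1"
    using norm_prod_minus1_le_prod_minus1[of "\<lambda>l. - (p ^ (M - l))" "{..<j}"] by (simp add: qfalling_def)
  also have "(\<Prod>l<j. 1 + norm (- (p ^ (M - l)))) \<le> (\<Prod>l<j. exp (r ^ (M - l)))"
    by (intro prod_mono) (use r in \<open>auto simp: r_def norm_power\<close>)
  also have "\<dots> = exp (\<Sum>l<j. r ^ (M - l))" by (simp add: exp_sum)
  also have "(\<Sum>l<j. r ^ (M - l)) = r ^ (M - j + 1) * (\<Sum>l<j. r ^ (j - Suc l))"
    unfolding sum_distrib_left
  proof (rule sum.cong)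
    fix l assume "l \<in> {..<j}"
    then have "M - l = (M - j + 1) + (j - Suc l)" using j by simp
    then show "r ^ (M - l) = r ^ (M - j + 1) * r ^ (j - Suc l)" by (simp only: power_add)
  qed simp
  also have "(\<Sum>l<j. r ^ (j - Suc l)) = (\<Sum>i<j. r ^ i)" by (rule sum.nat_diff_reindex)
  also have "r ^ (M - j + 1) * (\<Sum>i<j. r ^ i) \<le> r ^ (M - j + 1) * (1 / (1 - r))"
    using r by (intro mult_left_mono sum_power_lessThan_le) auto
  finally show ?thesis unfolding r_def using r by (simp add: divide_simps)
qed

lemma exp_neg_le_one_minus:
  fixes u r :: real
  assumes "0 \<le> u" "u \<le> r" "r < 1"
  shows "exp (- (u / (1 - r))) \<le> 1 - u"
proof -
  have u: "u < 1" using assms by simp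
  have "1 / (1 - u) = 1 + u / (1 - u)" using u by (simp add: field_simps)
  also have "\<dots> \<le> exp (u / (1 - u))" by (rule exp_ge_add_one_self)
  finally have exp_ge: "1 / (1 - u) \<le> exp (u / (1 - u))" .
  have "exp (- (u / (1 - r))) \<le> exp (- (u / (1 - u)))"
    using assms by (simp add: divide_left_mono)
  also have "\<dots> = 1 / exp (u / (1 - u))" by (simp add: exp_minus field_simps)
  also have "\<dots> \<le> 1 / (1 / (1 - u))" using exp_ge u by (intro divide_left_mono) auto
  finally show ?thesis by simp
qed

lemma norm_qpochhammer_ge:
  fixes p :: complex
  assumes p: "norm p < 1"
  shows "exp (- (norm p / (1 - norm p)\<^sup>2)) \<le> norm (qpochhammer p j)"
proof -
  define r where "r = norm p"
  have r: "0 \<le> r" "r < 1" using p unfolding r_def by auto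
  have "(\<Sum>l<j. r ^ (l + 1)) = r * (\<Sum>l<j. r ^ l)" by (simp add: sum_distrib_left)
  also have "\<dots> \<le> r * (1 / (1 - r))" using r by (intro mult_left_mono sum_power_lessThan_le) auto
  finally have "(\<Sum>l<j. r ^ (l + 1)) / (1 - r) \<le> r * (1 / (1 - r)) / (1 - r)"
    using r by (intro divide_right_mono) auto
  also have "\<dots> = r / (1 - r)\<^sup>2" by (simp add: power2_eq_square)
  finally have "(\<Sum>l<j. r ^ (l + 1)) / (1 - r) \<le> r / (1 - r)\<^sup>2" .
  then have "exp (- (r / (1 - r)\<^sup>2)) \<le> (\<Prod>l<j. exp (- (r ^ (l + 1) / (1 - r))))"
    by (simp add: exp_sum[symmetric] sum_negf sum_divide_distrib)
  also have "\<dots> \<le> (\<Prod>l<j. norm (1 - p ^ (l + 1)))"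
  proof (rule prod_mono, intro conjI)
    fix l
    have "r ^ (l + 1) \<le> r ^ 1" by (rule power_decreasing) (use r in auto)
    then have "exp (- (r ^ (l + 1) / (1 - r))) \<le> 1 - r ^ (l + 1)"
      using r by (intro exp_neg_le_one_minus) auto
    also have "\<dots> \<le> norm (1 - p ^ (l + 1))"
      using norm_triangle_ineq2[of 1 "p ^ (l + 1)"] by (simp add: r_def norm_power norm_mult)
    finally show "exp (- (r ^ (l + 1) / (1 - r))) \<le> norm (1 - p ^ (l + 1))" .
  qed simp
  also have "\<dots> = norm (qpochhammer p j)" by (simp add: qpochhammer_def prod_norm)
  finally show ?thesis unfolding r_def .
qed

lemma qpochhammer_nonzero:
  fixes p :: complex
  shows "norm p < 1 \<Longrightarrow> qpochhammer p j \<noteq> 0"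
  using norm_qpochhammer_ge[of p j] by (metis exp_gt_zero norm_zero not_le)

lemma norm_qbinom_le:
  fixes p :: complex
  assumes p: "norm p < 1"
  shows "norm (qbinom p M j) \<le> exp (norm p / (1 - norm p)) * exp (norm p / (1 - norm p)\<^sup>2)"
proof (cases "j \<le> M")
  case False
  then show ?thesis by (simp add: qbinom_eq_0)
next
  case True
  define r where "r = norm p"
  have r: "0 \<le> r" "r < 1" using p unfolding r_def by auto
  have "norm (qfalling p M j) \<le> 1 + norm (qfalling p M j - 1)"
    using norm_triangle_ineq[of 1 "qfalling p M j - 1"] by simp
  also have "\<dots> \<le> exp (r ^ (M - j + 1) / (1 - r))"
    using norm_qfalling_minus_1_le[OF p True] unfolding r_def by simp
  also have "\<dots> \<le> exp (r / (1 - r))"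
    using power_decreasing[of 1 "M - j + 1" r] r by (simp add: divide_right_mono)
  finally have numer: "norm (qfalling p M j) \<le> exp (r / (1 - r))" .
  have denom: "exp (- (r / (1 - r)\<^sup>2)) \<le> norm (qpochhammer p j)"
    using norm_qpochhammer_ge[OF p] unfolding r_def .
  have "qbinom p M j = qfalling p M j / qpochhammer p j"
    using qbinom_mult_qpochhammer[OF True, of p] qpochhammer_nonzero[OF p, of j] by (simp add: field_simps)
  then have "norm (qbinom p M j) = norm (qfalling p M j) / norm (qpochhammer p j)"
    by (simp add: norm_divide)
  also have "\<dots> \<le> exp (r / (1 - r)) / exp (- (r / (1 - r)\<^sup>2))"
    by (rule frac_le) (use numer denom in auto)
  also have "\<dots> = exp (r / (1 - r)) * exp (r / (1 - r)\<^sup>2)" by (simp add: exp_minus field_simps)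
  finally show ?thesis unfolding r_def .
qed

lemma qpochhammer_limit:
  fixes p :: complex
  assumes p: "norm p < 1"
  shows "convergent_prod (\<lambda>l. 1 - p ^ (l + 1))" and "prodinf (\<lambda>l. 1 - p ^ (l + 1)) \<noteq> 0"
    and "qpochhammer p \<longlonglongrightarrow> prodinf (\<lambda>l. 1 - p ^ (l + 1))"
proof -
  have "summable (\<lambda>l. norm p * norm p ^ l)"
    using p by (intro summable_mult summable_geometric) simp
  then have "summable (\<lambda>l. norm ((1 - p ^ (l + 1)) - 1))" by (simp add: norm_power norm_mult)
  then show conv: "convergent_prod (\<lambda>l. 1 - p ^ (l + 1))"
    by (intro abs_convergent_prod_imp_convergent_prod summable_imp_abs_convergent_prod)
  have "1 - p ^ (l + 1) \<noteq> 0" for l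
    using qpochhammer_nonzero[OF p, of "Suc l"] by (simp add: qpochhammer_def)
  then show "prodinf (\<lambda>l. 1 - p ^ (l + 1)) \<noteq> 0" by (rule prodinf_nonzero[OF conv])
  show "qpochhammer p \<longlonglongrightarrow> prodinf (\<lambda>l. 1 - p ^ (l + 1))"
    using convergent_prod_LIMSEQ[OF conv] LIMSEQ_lessThan_iff_atMost[where f = "prod (\<lambda>l. 1 - p ^ (l + 1))"]
    unfolding qpochhammer_def by (simp add: fun_eq_iff)
qed

lemma qfalling_tendsto_1:
  fixes p :: complex
  assumes p: "norm p < 1"
    and gap: "filterlim (\<lambda>n. M n - J n) at_top F" and le: "eventually (\<lambda>n. J n \<le> M n) F"
  shows "((\<lambda>n. qfalling p (M n) (J n)) \<longlongrightarrow> 1) F"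
proof -
  define r where "r = norm p"
  have r: "0 \<le> r" "r < 1" using p unfolding r_def by auto
  have "((\<lambda>n. r ^ (M n - J n + 1)) \<longlongrightarrow> 0) F"
    using r by (intro filterlim_compose[OF LIMSEQ_power_zero]
      filterlim_compose[OF filterlim_add_const_nat_at_top gap]) auto
  then have "((\<lambda>n. exp (r ^ (M n - J n + 1) / (1 - r)) - 1) \<longlongrightarrow> exp (0 / (1 - r)) - 1) F"
    by (intro tendsto_intros) (use r in auto)
  then have bound_tendsto: "((\<lambda>n. exp (r ^ (M n - J n + 1) / (1 - r)) - 1) \<longlongrightarrow> 0) F"
    by simp
  have "((\<lambda>n. qfalling p (M n) (J n) - 1) \<longlongrightarrow> 0) F"
  proof (rule Lim_null_comparison[OF _ bound_tendsto])
    show "\<forall>\<^sub>F n in F. norm (qfalling p (M n) (J n) - 1) \<le> exp (r ^ (M n - J n + 1) / (1 - r)) - 1"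
      using le by eventually_elim (use norm_qfalling_minus_1_le[OF p] in \<open>simp add: r_def\<close>)
  qed
  then show ?thesis by (simp add: LIM_zero_iff)
qed

lemma qbinom_tendsto:
  fixes p :: complex
  assumes p: "norm p < 1" and J: "filterlim J at_top F"
    and gap: "filterlim (\<lambda>n. M n - J n) at_top F" and le: "eventually (\<lambda>n. J n \<le> M n) F"
  shows "((\<lambda>n. qbinom p (M n) (J n)) \<longlongrightarrow> 1 / prodinf (\<lambda>l. 1 - p ^ (l + 1))) F"
proof (rule Lim_transform_eventually)
  show "((\<lambda>n. qfalling p (M n) (J n) / qpochhammer p (J n)) \<longlongrightarrow>
      1 / prodinf (\<lambda>l. 1 - p ^ (l + 1))) F"
    using qfalling_tendsto_1[OF p gap le] filterlim_compose[OF qpochhammer_limit(3)[OF p] J] qpochhammer_limit(2)[OF p]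
    by (rule tendsto_divide)
  show "\<forall>\<^sub>F n in F. qfalling p (M n) (J n) / qpochhammer p (J n) = qbinom p (M n) (J n)"
    using le
  proof eventually_elim
    case (elim n)
    then show ?case
      using qbinom_mult_qpochhammer[OF elim, of p] qpochhammer_nonzero[OF p, of "J n"] by (simp add: field_simps)
  qed
qed

lemma qbinom_central_tendsto:
  fixes p :: complex
  assumes "norm p < 1"
  shows "(\<lambda>N. qbinom p (2 * N) (N + m)) \<longlonglongrightarrow> 1 / prodinf (\<lambda>l. 1 - p ^ (l + 1))"
    and "(\<lambda>N. qbinom p (2 * N) (N - m)) \<longlonglongrightarrow> 1 / prodinf (\<lambda>l. 1 - p ^ (l + 1))"
proof -
  show "(\<lambda>N. qbinom p (2 * N) (N + m)) \<longlonglongrightarrow> 1 / prodinf (\<lambda>l. 1 - p ^ (l + 1))"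
  proof (rule qbinom_tendsto[OF assms])
    show "filterlim (\<lambda>N. N + m) at_top sequentially" by (rule filterlim_add_const_nat_at_top)
    have "(\<lambda>N. 2 * N - (N + m)) = (\<lambda>N. N - m)" by auto
    then show "filterlim (\<lambda>N. 2 * N - (N + m)) at_top sequentially"
      using filterlim_minus_const_nat_at_top[of m] by simp
    show "\<forall>\<^sub>F N in sequentially. N + m \<le> 2 * N"
      using eventually_ge_at_top[of m] by eventually_elim simp
  qed
  show "(\<lambda>N. qbinom p (2 * N) (N - m)) \<longlonglongrightarrow> 1 / prodinf (\<lambda>l. 1 - p ^ (l + 1))"
  proof (rule qbinom_tendsto[OF assms])
    show "filterlim (\<lambda>N. N - m) at_top sequentially" by (rule filterlim_minus_const_nat_at_top)
    show "filterlim (\<lambda>N. 2 * N - (N - m)) at_top sequentially"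
      by (rule filterlim_at_top_mono[OF filterlim_ident]) (intro always_eventually allI, arith)
    show "\<forall>\<^sub>F N in sequentially. N - m \<le> 2 * N" by (intro always_eventually allI) arith
  qed
qed

lemma tendsto_suminf_bounded_weights:
  fixes u :: "nat \<Rightarrow> 'a::{real_normed_field, banach}"
  assumes u: "summable (\<lambda>m. norm (u m))"
    and lim: "\<And>m. (\<lambda>N. c m N) \<longlonglongrightarrow> w" and bound: "\<And>m N. norm (c m N) \<le> B"
  shows "(\<lambda>N. \<Sum>m. c m N * u m) \<longlonglongrightarrow> w * (\<Sum>m. u m)"
proof -
  have "eventually (\<lambda>N. summable (\<lambda>m. norm (c m N * u m))) sequentially \<and>
        summable (\<lambda>m. norm (w * u m)) \<and>
        ((\<lambda>N. \<Sum>m. c m N * u m) \<longlonglongrightarrow> (\<Sum>m. w * u m))"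
  proof (rule tannerys_theorem)
    show "(\<lambda>N. c m N * u m) \<longlonglongrightarrow> w * u m" for m
      by (intro tendsto_intros lim)
    show "\<forall>\<^sub>F (m, N) in sequentially \<times>\<^sub>F sequentially. norm (c m N * u m) \<le> B * norm (u m)"
      by (intro always_eventually) (auto simp: norm_mult intro!: mult_right_mono bound)
    show "summable (\<lambda>m. B * norm (u m))" by (rule summable_mult[OF u])
  qed simp
  then show ?thesis
    using suminf_mult[OF summable_norm_cancel[OF u], of w] by simp
qed

lemma norm_lt_1_if_norm_mult_divide_lt_1:
  fixes Q x :: complex
  assumes "x \<noteq> 0" "norm (Q * x) < 1" "norm (Q / x) < 1"
  shows "norm Q < 1"
proof -
  have "norm Q ^ 2 = norm (Q * x) * norm (Q / x)"
    using assms(1) by (simp add: norm_mult norm_divide power2_eq_square)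
  also have "\<dots> < 1 * 1" using assms(2,3) by (intro mult_strict_mono) auto
  finally show ?thesis by (simp add: power_less_one_iff)
qed

lemma jacobi_factors:
  fixes Q x :: complex
  assumes x: "x \<noteq> 0" and Qx: "norm (Q * x) < 1" and Qdx: "norm (Q / x) < 1"
  defines "h \<equiv> \<lambda>i. (1 + x * Q ^ (2 * i + 1)) * (1 + Q ^ (2 * i + 1) / x)"
  shows "convergent_prod h" and "\<And>i. h i \<noteq> 0"
proof -
  have nQ: "norm Q < 1" by (rule norm_lt_1_if_norm_mult_divide_lt_1[OF x Qx Qdx])
  define A where "A i = x * Q ^ (2 * i + 1)" for i
  define B where "B i = Q ^ (2 * i + 1) / x" for i
  have pw: "(norm Q ^ 2) ^ i \<le> 1" for i
    using nQ by (simp add: power_le_one)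
  have "norm (A i) = norm (Q * x) * (norm Q ^ 2) ^ i" "norm (B i) = norm (Q / x) * (norm Q ^ 2) ^ i" for i
    unfolding A_def B_def by (simp_all add: norm_mult norm_divide norm_power power_mult[symmetric] algebra_simps)
  then have A: "norm (A i) \<le> (norm Q ^ 2) ^ i" "norm (A i) < 1"
    and B: "norm (B i) \<le> (norm Q ^ 2) ^ i" "norm (B i) < 1" for i
    using Qx Qdx pw[of i] by (auto simp: mult_left_le_one_le mult_le_one intro: le_less_trans[OF mult_right_le_one_le])
  have bound: "norm (h i - 1) \<le> 3 * (norm Q ^ 2) ^ i" for i
  proof -
    have "h i - 1 = A i + B i + A i * B i" unfolding h_def A_def B_def by (simp add: algebra_simps)
    then have "norm (h i - 1) \<le> norm (A i) + norm (B i) + norm (A i) * norm (B i)"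
      by (metis norm_mult norm_triangle_le norm_triangle_mono order.refl)
    also have "\<dots> \<le> (norm Q ^ 2) ^ i + (norm Q ^ 2) ^ i + (norm Q ^ 2) ^ i * 1"
      using A(1)[of i] B(1)[of i] pw[of i] by (intro add_mono mult_mono) auto
    finally show ?thesis by simp
  qed
  have geom: "summable (\<lambda>i. 3 * (norm Q ^ 2) ^ i)"
    using nQ by (intro summable_mult summable_geometric) (simp add: power_less_one_iff)
  have "summable (\<lambda>i. norm (h i - 1))"
    by (rule summable_comparison_test'[OF geom, where N = 0]) (use bound in simp)
  then show "convergent_prod h"
    by (intro abs_convergent_prod_imp_convergent_prod summable_imp_abs_convergent_prod)
  show "h i \<noteq> 0" for i
  proof -
    have "1 + A i \<noteq> 0" "1 + B i \<noteq> 0"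
      using A(2)[of i] B(2)[of i] by (auto simp: add_eq_0_iff)
    then show ?thesis unfolding h_def A_def B_def by simp
  qed
qed

lemma power_square_le:
  fixes q :: real
  assumes "0 \<le> q" "q \<le> 1"
  shows "q ^ (m * m) \<le> q ^ m"
  by (rule power_decreasing) (use assms in \<open>auto simp: le_square\<close>)

lemma summable_jacobi_series:
  fixes Q x :: complex
  assumes Q: "norm Q < 1" and Qx: "norm (Q * x) < 1" and Qdx: "norm (Q / x) < 1"
  shows "summable (\<lambda>m. norm (Q ^ (m * m) * x ^ m))"
    and "summable (\<lambda>m. norm (Q ^ ((m + 1) * (m + 1)) * (1 / x) ^ (m + 1)))"
proof -
  have bound_pos: "norm (Q ^ (m * m) * x ^ m) \<le> norm (Q * x) ^ m" for m
  proof -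
    have "norm (Q ^ (m * m) * x ^ m) \<le> norm Q ^ m * norm x ^ m"
      unfolding norm_mult norm_power using power_square_le[of "norm Q" m] Q by (intro mult_right_mono) auto
    then show ?thesis by (simp add: norm_mult power_mult_distrib)
  qed
  have bound_neg: "norm (Q ^ ((m + 1) * (m + 1)) * (1 / x) ^ (m + 1)) \<le> norm (Q / x) ^ (m + 1)" for m
  proof -
    have "norm (Q ^ ((m + 1) * (m + 1)) * (1 / x) ^ (m + 1)) \<le> norm Q ^ (m + 1) * norm (1 / x) ^ (m + 1)"
      unfolding norm_mult norm_power using power_square_le[of "norm Q" "m + 1"] Q
      by (intro mult_right_mono) auto
    then show ?thesis by (simp add: norm_divide power_divide)
  qed
  have "summable (\<lambda>m. norm (Q * x) ^ m)"
    using Qx by (simp add: summable_geometric)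
  then show "summable (\<lambda>m. norm (Q ^ (m * m) * x ^ m))"
    by (rule summable_comparison_test'[where N = 0]) (use bound_pos in simp)
  have "summable (\<lambda>m. norm (Q / x) ^ (m + 1))"
    using summable_mult[OF summable_geometric[of "norm (Q / x)"], of "norm (Q / x)"] Qdx by simp
  then show "summable (\<lambda>m. norm (Q ^ ((m + 1) * (m + 1)) * (1 / x) ^ (m + 1)))"
    by (rule summable_comparison_test'[where N = 0]) (use bound_neg in simp)
qed

lemma jacobi_partial_products_tendsto:
  fixes Q x :: complex
  assumes Q: "Q \<noteq> 0" and x: "x \<noteq> 0" and Qx: "norm (Q * x) < 1" and Qdx: "norm (Q / x) < 1"
  shows "(\<lambda>N. \<Prod>i<N. (1 + x * Q ^ (2 * i + 1)) * (1 + Q ^ (2 * i + 1) / x)) \<longlonglongrightarrow>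
    ((\<Sum>m. Q ^ (m * m) * x ^ m) + (\<Sum>m. Q ^ ((m + 1) * (m + 1)) * (1 / x) ^ (m + 1))) /
      prodinf (\<lambda>l. 1 - (Q\<^sup>2) ^ (l + 1))"
proof -
  have nQ: "norm Q < 1" by (rule norm_lt_1_if_norm_mult_divide_lt_1[OF x Qx Qdx])
  define p where "p = Q\<^sup>2"
  have p: "norm p < 1" unfolding p_def using nQ by (simp add: norm_power power_less_one_iff)
  define E where "E = prodinf (\<lambda>l. 1 - p ^ (l + 1))"
  define u where "u m = Q ^ (m * m) * x ^ m" for m
  define v where "v m = Q ^ ((m + 1) * (m + 1)) * (1 / x) ^ (m + 1)" for m
  note su = summable_jacobi_series(1)[OF nQ Qx Qdx, folded u_def]
  note sv = summable_jacobi_series(2)[OF nQ Qx Qdx, folded v_def]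
  define B where "B = exp (norm p / (1 - norm p)) * exp (norm p / (1 - norm p)\<^sup>2)"
  have B: "norm (qbinom p M j) \<le> B" "0 \<le> B" for M j
    unfolding B_def using norm_qbinom_le[OF p] by auto
  define a where "a m N = qbinom p (2 * N) (N + m)" for m N
  define b where "b m N = (if m < N then qbinom p (2 * N) (N - Suc m) else 0)" for m N
  have lim_u: "(\<lambda>N. \<Sum>m. a m N * u m) \<longlonglongrightarrow> (1 / E) * (\<Sum>m. u m)"
    by (rule tendsto_suminf_bounded_weights[OF su])
      (use qbinom_central_tendsto(1)[OF p] B in \<open>auto simp: a_def E_def\<close>)
  have "(\<lambda>N. b m N) \<longlonglongrightarrow> 1 / E" for m
  proof (rule Lim_transform_eventually)
    show "(\<lambda>N. qbinom p (2 * N) (N - Suc m)) \<longlonglongrightarrow> 1 / E"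
      unfolding E_def by (rule qbinom_central_tendsto(2)[OF p])
    show "\<forall>\<^sub>F N in sequentially. qbinom p (2 * N) (N - Suc m) = b m N"
      using eventually_gt_at_top[of m] by eventually_elim (simp add: b_def)
  qed
  then have lim_v: "(\<lambda>N. \<Sum>m. b m N * v m) \<longlonglongrightarrow> (1 / E) * (\<Sum>m. v m)"
    by (rule tendsto_suminf_bounded_weights[OF sv]) (use B in \<open>auto simp: b_def\<close>)
  have partial: "(\<Prod>i<N. (1 + x * Q ^ (2 * i + 1)) * (1 + Q ^ (2 * i + 1) / x)) =
      (\<Sum>m. a m N * u m) + (\<Sum>m. b m N * v m)" for N
  proof -
    have "(\<Sum>m. a m N * u m) = (\<Sum>m\<le>N. a m N * u m)"
      by (rule suminf_finite) (auto simp: a_def qbinom_eq_0)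
    moreover have "(\<Sum>m. b m N * v m) = (\<Sum>m<N. b m N * v m)"
      by (rule suminf_finite) (auto simp: b_def)
    ultimately show ?thesis
      using jacobi_triple_product_finite[OF Q x, of N] by (simp add: a_def b_def u_def v_def p_def mult.assoc)
  qed
  have "(\<lambda>N. \<Prod>i<N. (1 + x * Q ^ (2 * i + 1)) * (1 + Q ^ (2 * i + 1) / x)) \<longlonglongrightarrow>
      (1 / E) * (\<Sum>m. u m) + (1 / E) * (\<Sum>m. v m)"
    unfolding partial by (rule tendsto_add[OF lim_u lim_v])
  moreover have "(1 / E) * (\<Sum>m. u m) + (1 / E) * (\<Sum>m. v m) = ((\<Sum>m. u m) + (\<Sum>m. v m)) / E"
    by (simp add: add_divide_distrib)
  ultimately show ?thesis unfolding u_def v_def E_def p_def by simp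
qed

lemma jacobi_triple_product:
  fixes Q x :: complex
  assumes Q: "Q \<noteq> 0" and x: "x \<noteq> 0" and Qx: "norm (Q * x) < 1" and Qdx: "norm (Q / x) < 1"
  shows "(\<Sum>m. Q ^ (m * m) * x ^ m) + (\<Sum>m. Q ^ ((m + 1) * (m + 1)) * (1 / x) ^ (m + 1)) =
    prodinf (\<lambda>l. 1 - (Q\<^sup>2) ^ (l + 1)) *
    prodinf (\<lambda>i. (1 + x * Q ^ (2 * i + 1)) * (1 + Q ^ (2 * i + 1) / x))"
proof -
  define h where "h = (\<lambda>i. (1 + x * Q ^ (2 * i + 1)) * (1 + Q ^ (2 * i + 1) / x))"
  have "norm (Q\<^sup>2) < 1"
    using norm_lt_1_if_norm_mult_divide_lt_1[OF x Qx Qdx] by (simp add: norm_power power_less_one_iff)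
  then have E: "prodinf (\<lambda>l. 1 - (Q\<^sup>2) ^ (l + 1)) \<noteq> 0" by (rule qpochhammer_limit(2))
  have "(\<lambda>N. \<Prod>i<N. h i) \<longlonglongrightarrow> prodinf h"
    using convergent_prod_LIMSEQ[OF jacobi_factors(1)[OF x Qx Qdx]] LIMSEQ_lessThan_iff_atMost[where f = "prod h"]
    unfolding h_def by simp
  with jacobi_partial_products_tendsto[OF assms] have
    "((\<Sum>m. Q ^ (m * m) * x ^ m) + (\<Sum>m. Q ^ ((m + 1) * (m + 1)) * (1 / x) ^ (m + 1))) /
      prodinf (\<lambda>l. 1 - (Q\<^sup>2) ^ (l + 1)) = prodinf h"
    unfolding h_def by (rule LIMSEQ_unique)
  with E show ?thesis unfolding h_def by (simp add: divide_eq_eq mult.commute)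
qed

lemma theta_series_nonzero:
  fixes Q x :: complex
  assumes "Q \<noteq> 0" "x \<noteq> 0" "norm (Q * x) < 1" "norm (Q / x) < 1"
  shows "(\<Sum>m. Q ^ (m * m) * x ^ m) + (\<Sum>m. Q ^ ((m + 1) * (m + 1)) * (1 / x) ^ (m + 1)) \<noteq> 0"
proof -
  have "norm (Q\<^sup>2) < 1"
    using norm_lt_1_if_norm_mult_divide_lt_1[OF assms(2-4)] by (simp add: norm_power power_less_one_iff)
  then show ?thesis
    unfolding jacobi_triple_product[OF assms]
    using qpochhammer_limit(2) prodinf_nonzero[OF jacobi_factors[OF assms(2-4)]] by simp
qed

section \<open>Nonvanishing of the theta constants\<close>

lemma infsum_int_eq_suminf:
  fixes f :: "int \<Rightarrow> 'a::banach"
  assumes "(\<lambda>n. norm (f n)) summable_on UNIV"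
  shows "summable (\<lambda>m. f (int m))" "summable (\<lambda>m. f (- int (Suc m)))"
    and "infsum f UNIV = (\<Sum>m. f (int m)) + (\<Sum>m. f (- int (Suc m)))"
proof -
  have sf: "f summable_on A" for A
    using abs_summable_summable[OF assms] by (rule summable_on_subset_banach) simp
  have "(f has_sum infsum f (range int)) (range int)"
    by (rule has_sum_infsum[OF sf])
  then have "((f \<circ> int) has_sum infsum f (range int)) UNIV"
    by (subst (asm) has_sum_reindex) auto
  then have pos: "(\<lambda>m. f (int m)) sums infsum f (range int)"
    by (auto simp: o_def dest: has_sum_imp_sums)
  have "(f has_sum infsum f (range (\<lambda>m. - int (Suc m)))) (range (\<lambda>m. - int (Suc m)))"
    by (rule has_sum_infsum[OF sf])
  then have "((f \<circ> (\<lambda>m. - int (Suc m))) has_sum infsum f (range (\<lambda>m. - int (Suc m)))) UNIV"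
    by (subst (asm) has_sum_reindex) (auto simp: inj_on_def)
  then have neg: "(\<lambda>m. f (- int (Suc m))) sums infsum f (range (\<lambda>m. - int (Suc m)))"
    by (auto simp: o_def dest: has_sum_imp_sums)
  show "summable (\<lambda>m. f (int m))" "summable (\<lambda>m. f (- int (Suc m)))"
    using pos neg by (auto simp: sums_iff)
  have "infsum f (range int \<union> range (\<lambda>m. - int (Suc m))) =
      infsum f (range int) + infsum f (range (\<lambda>m. - int (Suc m)))"
    by (rule infsum_Un_disjoint[OF sf sf]) auto
  then have "infsum f UNIV = infsum f (range int) + infsum f (range (\<lambda>m. - int (Suc m)))"
    by (simp only: range_int_Un_range_neg)
  then show "infsum f UNIV = (\<Sum>m. f (int m)) + (\<Sum>m. f (- int (Suc m)))"
    using pos neg by (simp add: sums_iff)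
qed

lemma theta_term_shift:
  fixes t :: complex and r k :: int
  defines "Q \<equiv> exp (pi * \<i> * t)"
    and "x \<equiv> exp (pi * \<i> * t * of_int r / 5 + 2 * pi * \<i> * of_int k / 10)"
  shows "theta_term t (10 * int m + r) k = theta_term t r k * (Q ^ (m * m) * x ^ m)"
    and "theta_term t (10 * - int (Suc m) + r) k =
      theta_term t r k * (Q ^ ((m + 1) * (m + 1)) * (1 / x) ^ (m + 1))"
proof -
  define w where "w = pi * \<i> * t * of_int r / 5 + 2 * pi * \<i> * of_int k / 10"
  have shift: "theta_term t (10 * n + r) k =
      theta_term t r k * exp (of_int (n * n) * (pi * \<i> * t)) * exp (of_int n * w)" for n
    unfolding theta_term_def w_def exp_add[symmetric]
    by (rule arg_cong[where f = exp]) (simp add: field_simps power2_eq_square)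
  have "exp (of_int (int m * int m) * (pi * \<i> * t)) = Q ^ (m * m)" "exp (of_int (int m) * w) = x ^ m"
    unfolding Q_def x_def w_def exp_of_nat_mult[symmetric] by simp_all
  then show "theta_term t (10 * int m + r) k = theta_term t r k * (Q ^ (m * m) * x ^ m)"
    using shift[of "int m"] by simp
  have "- int (Suc m) * - int (Suc m) = int ((m + 1) * (m + 1))" by (simp add: algebra_simps)
  then have "exp (of_int (- int (Suc m) * - int (Suc m)) * (pi * \<i> * t)) = Q ^ ((m + 1) * (m + 1))"
    unfolding Q_def exp_of_nat_mult[symmetric] by simp
  moreover have "exp (of_int (- int (Suc m)) * w) = (1 / x) ^ (m + 1)"
  proof -
    have "exp (of_int (- int (Suc m)) * w) = exp (- w) ^ (m + 1)"
      unfolding exp_of_nat_mult[symmetric] by (simp add: algebra_simps)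
    also have "exp (- w) = 1 / x"
      unfolding x_def w_def[symmetric] by (simp add: exp_minus inverse_eq_divide)
    finally show ?thesis .
  qed
  ultimately show "theta_term t (10 * - int (Suc m) + r) k =
      theta_term t r k * (Q ^ ((m + 1) * (m + 1)) * (1 / x) ^ (m + 1))"
    using shift[of "- int (Suc m)"] by simp
qed

lemma theta_const_eq_jacobi_series:
  fixes t :: complex and r k :: int
  assumes t: "Im t > 0"
  defines "Q \<equiv> exp (pi * \<i> * t)"
    and "x \<equiv> exp (pi * \<i> * t * of_int r / 5 + 2 * pi * \<i> * of_int k / 10)"
  shows "theta_const (of_int r / 5) (of_int k / 5) t =
    theta_term t r k * ((\<Sum>m. Q ^ (m * m) * x ^ m) + (\<Sum>m. Q ^ ((m + 1) * (m + 1)) * (1 / x) ^ (m + 1)))"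
proof -
  define K where "K = theta_term t r k"
  note shift = theta_term_shift[where t = t and r = r and k = k, folded Q_def x_def K_def]
  have "(\<lambda>a. norm (theta_term t a k)) summable_on range (\<lambda>n. 10 * n + r)"
    using theta_term_abs_summable[OF t] by (rule summable_on_subset) simp
  then have "(\<lambda>n. norm (theta_term t (10 * n + r) k)) summable_on UNIV"
    by (subst (asm) summable_on_reindex) (auto simp: o_def inj_on_def)
  note I = infsum_int_eq_suminf[OF this]
  have K0: "K \<noteq> 0" unfolding K_def theta_term_def by simp
  have "(\<lambda>m. 1 / K * theta_term t (10 * int m + r) k) = (\<lambda>m. Q ^ (m * m) * x ^ m)"
    "(\<lambda>m. 1 / K * theta_term t (10 * - int (Suc m) + r) k) =
      (\<lambda>m. Q ^ ((m + 1) * (m + 1)) * (1 / x) ^ (m + 1))"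
    unfolding shift using K0 by simp_all
  then have su: "summable (\<lambda>m. Q ^ (m * m) * x ^ m)"
    and sv: "summable (\<lambda>m. Q ^ ((m + 1) * (m + 1)) * (1 / x) ^ (m + 1))"
    using summable_mult[OF I(1), of "1 / K"] summable_mult[OF I(2), of "1 / K"] by simp_all
  show ?thesis
    unfolding theta_const_eq_infsum I(3) shift suminf_mult[OF su] suminf_mult[OF sv] K_def[symmetric]
    by (simp add: distrib_left)
qed

lemma theta_const_nonzero:
  assumes t: "Im t > 0" and r: "0 < r" "r < 5"
  shows "theta_const (of_int r / 5) (of_int k / 5) t \<noteq> 0"
proof -
  define Q where "Q = exp (pi * \<i> * t)"
  define x where "x = exp (pi * \<i> * t * of_int r / 5 + 2 * pi * \<i> * of_int k / 10)"
  have "norm (Q * x) = exp (- (pi * Im t * (1 + of_int r / 5)))"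
    unfolding Q_def x_def by (simp add: norm_mult exp_add[symmetric] norm_exp_eq_Re field_simps)
  then have Qx: "norm (Q * x) < 1" using t r by simp
  have "norm (Q / x) = exp (- (pi * Im t * (1 - of_int r / 5)))"
    unfolding Q_def x_def by (simp add: norm_divide exp_diff[symmetric] norm_exp_eq_Re field_simps)
  then have Qdx: "norm (Q / x) < 1" using t r by (simp add: field_simps)
  have "Q \<noteq> 0" "x \<noteq> 0" "theta_term t r k \<noteq> 0" unfolding Q_def x_def theta_term_def by simp_all
  then show ?thesis
    unfolding theta_const_eq_jacobi_series[OF t, of r k, folded Q_def x_def]
    using theta_series_nonzero[OF _ _ Qx Qdx] by simp
qed

lemma zeta5_power_5: "zeta5 ^ 5 = 1"
  unfolding zeta5_def exp_of_nat_mult[symmetric] using exp_two_pi_i by (simp add: ac_simps)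

lemma exp_hundredths_zeta5:
  shows "exp (2 * pi * \<i> * of_int 40 / 100) = zeta5 ^ 2"
    and "exp (2 * pi * \<i> * of_int 60 / 100) = zeta5 ^ 3"
    and "exp (2 * pi * \<i> * of_int 10 / 100) = - (zeta5 ^ 3)"
proof -
  have power: "zeta5 ^ n = exp (2 * pi * \<i> * of_int (20 * int n) / 100)" for n
    unfolding zeta5_def exp_of_nat_mult[symmetric] by (rule arg_cong[where f = exp]) simp
  show "exp (2 * pi * \<i> * of_int 40 / 100) = zeta5 ^ 2" using power[of 2] by simp
  show z3: "exp (2 * pi * \<i> * of_int 60 / 100) = zeta5 ^ 3" using power[of 3] by simp
  have "exp (2 * pi * \<i> * of_int 10 / 100) = exp (2 * pi * \<i> * of_int 60 / 100) * exp (- (pi * \<i>))"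
    unfolding exp_add[symmetric] by (rule arg_cong[where f = exp]) (simp add: field_simps)
  also have "exp (- (pi * \<i>)) = -1" by (simp add: exp_minus)
  finally show "exp (2 * pi * \<i> * of_int 10 / 100) = - (zeta5 ^ 3)" unfolding z3 by simp
qed

theorem theorem5p4:
  fixes t :: complex
  assumes "Im t > 0"
  defines "c \<equiv> (\<lambda>k::nat. theta_const (1/5) (real k / 5) t)"
      and "d \<equiv> (\<lambda>k::nat. theta_const (3/5) (real k / 5) t)"
  shows "theta_const 1 (1/5) t =
           - (zeta5^2) * ((d 1)^3 * c 5 + zeta5^3 * (d 7)^3 * c 1) / (c 3)^3 \<and>
         theta_const 1 (3/5) t =
           - (zeta5^3) * ((c 7)^3 * d 5 - (c 9)^3 * d 3) / (d 9)^3"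
proof -
  have "c 3 \<noteq> 0" "d 9 \<noteq> 0"
    using theta_const_nonzero[OF assms(1), of 1 3] theta_const_nonzero[OF assms(1), of 3 9]
    by (simp_all add: c_def d_def)
  then have theta1: "theta_const 1 (1/5) t = c 3 ^ 3 * theta_const 1 (1/5) t / c 3 ^ 3"
    and theta3: "theta_const 1 (3/5) t = d 9 ^ 3 * theta_const 1 (3/5) t / d 9 ^ 3"
    by simp_all
  have "c 3 ^ 3 * theta_const 1 (1/5) t + zeta5 ^ 2 * d 1 ^ 3 * c 5 + d 7 ^ 3 * c 1 = 0"
    using quad_lattice_identity_1[OF assms(1)] unfolding infsum_quad_term[OF assms(1)] exp_hundredths_zeta5
    by (simp add: c_def d_def algebra_simps)
  then have "c 3 ^ 3 * theta_const 1 (1/5) t = - (zeta5^2) * ((d 1)^3 * c 5 + zeta5^3 * (d 7)^3 * c 1)"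
    using zeta5_power_5 by algebra
  moreover have "d 9 ^ 3 * theta_const 1 (3/5) t + zeta5 ^ 3 * c 7 ^ 3 * d 5 - zeta5 ^ 3 * c 9 ^ 3 * d 3 = 0"
    using quad_lattice_identity_2[OF assms(1)] unfolding infsum_quad_term[OF assms(1)] exp_hundredths_zeta5
    by (simp add: c_def d_def algebra_simps)
  then have "d 9 ^ 3 * theta_const 1 (3/5) t = - (zeta5^3) * ((c 7)^3 * d 5 - (c 9)^3 * d 3)"
    by algebra
  ultimately show ?thesis
    using theta1 theta3 by simp
qed

end
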